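(* Let $\varepsilon\in\{0,\tfrac12\}$ and let $f$ be a biderivation of $\mathcal{SV}(\varepsilon)$. Then there exist linear maps $\phi,\psi:\mathcal{SV}(\varepsilon)\to\mathcal{SV}(\varepsilon)$ and linear complex-valued functions $\rho_1,\rho_2,\rho_3,\theta_1,\theta_2,\theta_3$ on $\mathcal{SV}(\varepsilon)$ such that for all $x,y\in\mathcal{SV}(\varepsilon)$, $$f(x,y)=\rho_1(x)D_1(y)+\rho_2(x)D_2(y)+\rho_3(x)D_3(y)+[\phi(x),y]=\theta_1(y)D_1(x)+\theta_2(y)D_2(x)+\theta_3(y)D_3(x)+[x,\psi(y)].$$
   Context: For $\varepsilon\in\{0,\frac12\}$, $\mathcal{SV}(\varepsilon)$ is the complex Lie algebra with basis $\{L_i,Y_j,M_i\mid i\in\mathbb{Z},\ j\in\varepsilon+\mathbb{Z}\}$ and brackets $[L_m,L_n]=(m-n)L_{m+n}$, $[L_m,Y_n]=(\frac12 m-n)Y_{m+n}$, $[L_m,M_n]=-nM_{m+n}$, $[Y_m,Y_n]=(m-n)M_{m+n}$, $[Y_m,M_n]=[M_m,M_n]=0$. A biderivation of a Lie algebra $L$ is a bilinear map $f:L\times L\to L$ with $f([x,y],z)=[x,f(y,z)]+[f(x,z),y]$ and $f(x,[y,z])=[f(x,y),z]+[y,f(x,z)]$ for all $x,y,z\in L$. The linear maps $D_1,D_2,D_3$ on $\mathcal{SV}(\varepsilon)$ are defined by $D_1(L_m)=M_m$, $D_1(Y_j)=D_1(M_m)=0$; $D_2(L_m)=mM_m$, $D_2(Y_j)=D_2(M_m)=0$;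 $D_3(L_m)=0$, $D_3(Y_j)=Y_j$, $D_3(M_m)=2M_m$ (for all $m\in\mathbb{Z}$, $j\in\varepsilon+\mathbb{Z}$). *)

theory Defs
  imports Complex_Main "HOL-Library.Function_Algebras"
begin

text \<open>Basis of SV(eps): L m (m integer), Y k standing for Y_(k+eps) (k integer),
  M m (m integer).  Elements are finitely supported coefficient functions.\<close>

datatype sv_idx = L int | Y int | M int

type_synonym sv_vec = "sv_idx \<Rightarrow> complex"

definition supp :: "sv_vec \<Rightarrow> sv_idx set" where
  "supp v = {i. v i \<noteq> 0}"

definition SV :: "sv_vec set" where
  "SV = {v. finite (supp v)}"

definition bvec :: "sv_idx \<Rightarrow> sv_vec" where
  "bvec i = (\<lambda>k. if k = i then 1 else 0)"

definition smult :: "complex \<Rightarrow> sv_vec \<Rightarrow> sv_vec" where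
  "smult c v = (\<lambda>k. c * v k)"

definition two_eps :: "real \<Rightarrow> int" where
  "two_eps eps = \<lfloor>2 * eps\<rfloor>"

fun bb :: "real \<Rightarrow> sv_idx \<Rightarrow> sv_idx \<Rightarrow> sv_vec" where
  "bb eps (L m) (L n) = smult (of_int (m - n)) (bvec (L (m + n)))"
| "bb eps (L m) (Y n) = smult (of_int m / 2 - (of_int n + complex_of_real eps)) (bvec (Y (m + n)))"
| "bb eps (L m) (M n) = smult (- of_int n) (bvec (M (m + n)))"
| "bb eps (Y m) (L n) = smult (- (of_int n / 2 - (of_int m + complex_of_real eps))) (bvec (Y (m + n)))"
| "bb eps (M m) (L n) = smult (of_int m) (bvec (M (m + n)))"
| "bb eps (Y m) (Y n) = smult (of_int (m - n)) (bvec (M (m + n + two_eps eps)))"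
| "bb eps (Y m) (M n) = (\<lambda>k. 0)"
| "bb eps (M m) (Y n) = (\<lambda>k. 0)"
| "bb eps (M m) (M n) = (\<lambda>k. 0)"

definition br :: "real \<Rightarrow> sv_vec \<Rightarrow> sv_vec \<Rightarrow> sv_vec" where
  "br eps u v = (\<Sum>i\<in>supp u. \<Sum>j\<in>supp v. smult (u i * v j) (bb eps i j))"

definition lin_ext :: "(sv_idx \<Rightarrow> sv_vec) \<Rightarrow> sv_vec \<Rightarrow> sv_vec" where
  "lin_ext g u = (\<Sum>i\<in>supp u. smult (u i) (g i))"

fun D1b :: "sv_idx \<Rightarrow> sv_vec" where
  "D1b (L m) = bvec (M m)"
| "D1b (Y j) = (\<lambda>k. 0)"
| "D1b (M m) = (\<lambda>k. 0)"

fun D2b :: "sv_idx \<Rightarrow> sv_vec" where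
  "D2b (L m) = smult (of_int m) (bvec (M m))"
| "D2b (Y j) = (\<lambda>k. 0)"
| "D2b (M m) = (\<lambda>k. 0)"

fun D3b :: "sv_idx \<Rightarrow> sv_vec" where
  "D3b (L m) = (\<lambda>k. 0)"
| "D3b (Y j) = bvec (Y j)"
| "D3b (M m) = smult 2 (bvec (M m))"

definition D1 :: "sv_vec \<Rightarrow> sv_vec" where "D1 = lin_ext D1b"
definition D2 :: "sv_vec \<Rightarrow> sv_vec" where "D2 = lin_ext D2b"
definition D3 :: "sv_vec \<Rightarrow> sv_vec" where "D3 = lin_ext D3b"

definition lin_map :: "(sv_vec \<Rightarrow> sv_vec) \<Rightarrow> bool" where
  "lin_map h \<longleftrightarrow> (\<forall>u\<in>SV. h u \<in> SV) \<and>
     (\<forall>u\<in>SV. \<forall>v\<in>SV. h (u + v) = h u + h v) \<and>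
     (\<forall>c. \<forall>u\<in>SV. h (smult c u) = smult c (h u))"

definition lin_fun :: "(sv_vec \<Rightarrow> complex) \<Rightarrow> bool" where
  "lin_fun h \<longleftrightarrow>
     (\<forall>u\<in>SV. \<forall>v\<in>SV. h (u + v) = h u + h v) \<and>
     (\<forall>c. \<forall>u\<in>SV. h (smult c u) = c * h u)"

definition biderivation :: "real \<Rightarrow> (sv_vec \<Rightarrow> sv_vec \<Rightarrow> sv_vec) \<Rightarrow> bool" where
  "biderivation eps f \<longleftrightarrow>
     (\<forall>x\<in>SV. \<forall>y\<in>SV. f x y \<in> SV) \<and>
     (\<forall>z\<in>SV. lin_map (\<lambda>x. f x z)) \<and>
     (\<forall>x\<in>SV. lin_map (\<lambda>y. f x y)) \<and>
     (\<forall>x\<in>SV. \<forall>y\<in>SV. \<forall>z\<in>SV.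
        f (br eps x y) z = br eps x (f y z) + br eps (f x z) y) \<and>
     (\<forall>x\<in>SV. \<forall>y\<in>SV. \<forall>z\<in>SV.
        f x (br eps y z) = br eps (f x y) z + br eps y (f x z))"

end

theory Submission
  imports Defs
begin

text \<open>A biderivation is a derivation in each argument, so it suffices to write every
  derivation \<open>D\<close> as \<open>c\<^sub>1 D\<^sub>1 + c\<^sub>2 D\<^sub>2 + c\<^sub>3 D\<^sub>3 + ad a\<close> with \<open>c\<^sub>i\<close> and \<open>a\<close> depending linearly
  on \<open>D\<close>; the second representation of \<open>f\<close> comes from the first one applied to
  \<open>x \<mapsto> f x y\<close> and antisymmetry. Since \<open>ad L\<^sub>0\<close> acts on each basis vector by minus its
  degree, subtracting \<open>ad\<close> of an element computed from \<open>D L\<^sub>0\<close> makes \<open>D\<close> degree-preserving.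
  Subtracting further a combination of \<open>D\<^sub>1, D\<^sub>2, D\<^sub>3, ad L\<^sub>0\<close> and (for \<open>eps = 0\<close>) \<open>ad Y\<^sub>0\<close>
  that matches five coordinates of \<open>D\<close> leaves a degree-preserving derivation which the
  Leibniz rule on a few brackets forces to vanish on \<open>L\<^sub>1, L\<^sub>-\<^sub>1, L\<^sub>2, L\<^sub>-\<^sub>2, Y\<^sub>0\<close>; these
  generate the algebra, so it vanishes.\<close>

declare plus_fun_apply [simp del] zero_fun_apply [simp del]

lemma sum_apply: "(\<Sum>i\<in>S. g i) k = (\<Sum>i\<in>S. g i k)"
  by (induction S rule: infinite_finite_induct) (auto simp: plus_fun_apply zero_fun_apply)

lemma smult_apply: "smult c v k = c * v k"
  by (simp add: smult_def)

lemma bvec_apply: "bvec i k = (if k = i then 1 else 0)"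
  by (simp add: bvec_def)

lemmas coord_simps = plus_fun_apply zero_fun_apply smult_apply bvec_apply

lemma smult_0_left [simp]: "smult 0 v = 0"
  by (simp add: smult_def fun_eq_iff zero_fun_apply)

lemma smult_0_right [simp]: "smult c 0 = 0"
  by (simp add: smult_def fun_eq_iff zero_fun_apply)

lemma smult_1 [simp]: "smult 1 u = u"
  by (simp add: smult_def)

lemma smult_smult [simp]: "smult c (smult d u) = smult (c * d) u"
  by (simp add: smult_def fun_eq_iff)

lemma smult_add_right: "smult c (u + v) = smult c u + smult c v"
  by (simp add: smult_def fun_eq_iff plus_fun_apply algebra_simps)

lemma smult_add_left: "smult (c + d) u = smult c u + smult d u"
  by (simp add: smult_def fun_eq_iff plus_fun_apply algebra_simps)

lemma smult_sum: "smult c (\<Sum>i\<in>S. g i) = (\<Sum>i\<in>S. smult c (g i))"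
  by (simp add: fun_eq_iff smult_apply sum_apply sum_distrib_left)

lemma smult_cancel:
  assumes "smult c u = smult c v" "c \<noteq> 0"
  shows "u = v"
  using assms by (auto simp: fun_eq_iff smult_apply)

lemma const_zero_eq: "(\<lambda>k. 0::complex) = 0"
  by (simp add: fun_eq_iff zero_fun_apply)

lemma supp_add: "supp (u + v) \<subseteq> supp u \<union> supp v"
  by (auto simp: supp_def plus_fun_apply)

lemma supp_smult: "supp (smult c u) \<subseteq> supp u"
  by (auto simp: supp_def smult_apply)

lemma supp_bvec [simp]: "supp (bvec i) = {i}"
  by (auto simp: supp_def bvec_def)

lemma finite_supp: "u \<in> SV \<Longrightarrow> finite (supp u)"
  by (simp add: SV_def)

lemma SV_zero [simp]: "0 \<in> SV"
  by (simp add: SV_def supp_def zero_fun_apply)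

lemma SV_add [simp]: "u \<in> SV \<Longrightarrow> v \<in> SV \<Longrightarrow> u + v \<in> SV"
  unfolding SV_def by (auto intro: finite_subset[OF supp_add])

lemma SV_smult [simp]: "u \<in> SV \<Longrightarrow> smult c u \<in> SV"
  unfolding SV_def by (auto intro: finite_subset[OF supp_smult])

lemma SV_bvec [simp]: "bvec i \<in> SV"
  by (simp add: SV_def)

lemma SV_sum [simp]: "(\<And>i. i \<in> S \<Longrightarrow> g i \<in> SV) \<Longrightarrow> (\<Sum>i\<in>S. g i) \<in> SV"
  by (induction S rule: infinite_finite_induct) auto

lemma SV_eq_sum_bvec:
  assumes "u \<in> SV"
  shows "u = (\<Sum>i\<in>supp u. smult (u i) (bvec i))"
proof
  fix k
  have "(\<Sum>i\<in>supp u. smult (u i) (bvec i)) k = (\<Sum>i\<in>supp u. if i = k then u k else 0)"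
    unfolding sum_apply by (rule sum.cong) (auto simp: smult_apply bvec_apply)
  also have "\<dots> = u k"
    using finite_supp[OF assms] by (simp add: sum.delta supp_def)
  finally show "u k = (\<Sum>i\<in>supp u. smult (u i) (bvec i)) k" by simp
qed

lemma lin_map_SV: "lin_map h \<Longrightarrow> u \<in> SV \<Longrightarrow> h u \<in> SV"
  by (simp add: lin_map_def)

lemma lin_map_add: "lin_map h \<Longrightarrow> u \<in> SV \<Longrightarrow> v \<in> SV \<Longrightarrow> h (u + v) = h u + h v"
  by (simp add: lin_map_def)

lemma lin_map_smult: "lin_map h \<Longrightarrow> u \<in> SV \<Longrightarrow> h (smult c u) = smult c (h u)"
  by (simp add: lin_map_def)

lemma lin_map_zero: "lin_map h \<Longrightarrow> h 0 = 0"
  by (metis SV_zero lin_map_smult smult_0_left)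

lemma lin_map_sum_bvec:
  assumes "lin_map h" "finite S"
  shows "h (\<Sum>i\<in>S. smult (c i) (bvec i)) = (\<Sum>i\<in>S. smult (c i) (h (bvec i)))"
  using assms(2)
proof induction
  case (insert x F)
  then show ?case
    by (simp add: lin_map_add[OF assms(1)] lin_map_smult[OF assms(1)])
qed (simp add: lin_map_zero[OF assms(1)])

lemma lin_map_eq_on_bvec:
  assumes "lin_map h" "lin_map g" "\<And>i. h (bvec i) = g (bvec i)" "u \<in> SV"
  shows "h u = g u"
proof -
  have "h u = (\<Sum>i\<in>supp u. smult (u i) (h (bvec i)))"
    by (subst SV_eq_sum_bvec[OF assms(4)]) (rule lin_map_sum_bvec[OF assms(1) finite_supp[OF assms(4)]])
  also have "\<dots> = g u"
    by (subst (2) SV_eq_sum_bvec[OF assms(4)]) (simp add: lin_map_sum_bvec[OF assms(2) finite_supp[OF assms(4)]] assms(3))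
  finally show ?thesis .
qed

lemma bilinear_eq_on_bvec:
  assumes "\<And>v. v \<in> SV \<Longrightarrow> lin_map (\<lambda>u. B u v)" "\<And>u. u \<in> SV \<Longrightarrow> lin_map (B u)"
    and "\<And>v. v \<in> SV \<Longrightarrow> lin_map (\<lambda>u. B' u v)" "\<And>u. u \<in> SV \<Longrightarrow> lin_map (B' u)"
    and "\<And>i j. B (bvec i) (bvec j) = B' (bvec i) (bvec j)" "u \<in> SV" "v \<in> SV"
  shows "B u v = B' u v"
proof -
  have "B (bvec i) v = B' (bvec i) v" for i
    by (rule lin_map_eq_on_bvec[OF assms(2,4)[OF SV_bvec] assms(5) assms(7)])
  then show ?thesis
    by (rule lin_map_eq_on_bvec[OF assms(1,3)[OF assms(7)] _ assms(6)])
qed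

lemma lin_map_plus: "lin_map h \<Longrightarrow> lin_map g \<Longrightarrow> lin_map (\<lambda>u. h u + g u)"
  by (simp add: lin_map_def smult_add_right algebra_simps)

lemma lin_map_scale: "lin_map h \<Longrightarrow> lin_map (\<lambda>u. smult c (h u))"
  by (simp add: lin_map_def smult_add_right mult.commute)

lemma lin_map_minus:
  assumes "lin_map h" "lin_map g"
  shows "lin_map (\<lambda>u. h u - g u)"
proof -
  have "(\<lambda>u. h u - g u) = (\<lambda>u. h u + smult (-1) (g u))"
    by (simp add: fun_eq_iff coord_simps)
  then show ?thesis
    using lin_map_plus[OF assms(1) lin_map_scale[OF assms(2)]] by simp
qed

lemma lin_map_comp: "lin_map h \<Longrightarrow> lin_map g \<Longrightarrow> lin_map (\<lambda>u. g (h u))"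
  by (simp add: lin_map_def)

lemma lin_map_lin_ext:
  assumes "\<And>i. g i \<in> SV"
  shows "lin_map (lin_ext g)"
proof -
  have sum_eq: "lin_ext g u = (\<Sum>i\<in>S. smult (u i) (g i))" if "finite S" "supp u \<subseteq> S" for u S
    unfolding lin_ext_def by (rule sum.mono_neutral_left) (use that in \<open>auto simp: supp_def\<close>)
  show ?thesis
    unfolding lin_map_def
  proof (intro conjI ballI allI)
    fix u v assume uv: "u \<in> SV" "v \<in> SV"
    then have fin: "finite (supp u \<union> supp v)" by (simp add: finite_supp)
    show "lin_ext g (u + v) = lin_ext g u + lin_ext g v"
      using supp_add[of u v]
      by (simp add: sum_eq[OF fin] plus_fun_apply smult_add_left sum.distrib)
  next
    fix c u assume "u \<in> SV"
    then have "lin_ext g (smult c u) = (\<Sum>i\<in>supp u. smult (smult c u i) (g i))"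
      using supp_smult[of c u] by (simp add: sum_eq finite_supp)
    then show "lin_ext g (smult c u) = smult c (lin_ext g u)"
      by (simp add: smult_apply smult_sum lin_ext_def)
  qed (simp add: lin_ext_def assms)
qed

lemma lin_ext_bvec [simp]: "lin_ext g (bvec i) = g i"
  by (simp add: lin_ext_def bvec_apply)

lemma bb_SV [simp]: "bb eps i j \<in> SV"
  by (cases i; cases j) (simp_all add: const_zero_eq)

lemma br_eq_sum:
  assumes "finite S" "finite T" "supp u \<subseteq> S" "supp v \<subseteq> T"
  shows "br eps u v = (\<Sum>i\<in>S. \<Sum>j\<in>T. smult (u i * v j) (bb eps i j))"
proof -
  have "br eps u v = (\<Sum>i\<in>S. \<Sum>j\<in>supp v. smult (u i * v j) (bb eps i j))"
    unfolding br_def by (rule sum.mono_neutral_left) (use assms in \<open>auto simp: supp_def\<close>)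
  also have "\<dots> = (\<Sum>i\<in>S. \<Sum>j\<in>T. smult (u i * v j) (bb eps i j))"
    by (intro sum.cong refl sum.mono_neutral_left) (use assms in \<open>auto simp: supp_def\<close>)
  finally show ?thesis .
qed

lemma br_SV [simp]: "br eps u v \<in> SV"
  unfolding br_def by simp

lemma br_bvec [simp]: "br eps (bvec i) (bvec j) = bb eps i j"
  by (simp add: br_def bvec_apply)

lemma br_zero_left [simp]: "br eps 0 v = 0"
  by (simp add: br_def supp_def zero_fun_apply)

lemma br_zero_right [simp]: "br eps u 0 = 0"
  by (simp add: br_def supp_def zero_fun_apply)

lemma br_add_left:
  assumes "u \<in> SV" "u' \<in> SV" "v \<in> SV"
  shows "br eps (u + u') v = br eps u v + br eps u' v"
proof -
  let ?S = "supp u \<union> supp u'"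
  have fin: "finite ?S" "finite (supp v)"
    using assms by (auto simp: finite_supp)
  have "br eps (u + u') v = (\<Sum>i\<in>?S. \<Sum>j\<in>supp v. smult ((u + u') i * v j) (bb eps i j))"
    using supp_add by (intro br_eq_sum[OF fin]) auto
  also have "\<dots> = (\<Sum>i\<in>?S. \<Sum>j\<in>supp v. smult (u i * v j) (bb eps i j))
      + (\<Sum>i\<in>?S. \<Sum>j\<in>supp v. smult (u' i * v j) (bb eps i j))"
    by (simp add: sum.distrib[symmetric] smult_add_left[symmetric] plus_fun_apply algebra_simps)
  also have "\<dots> = br eps u v + br eps u' v"
    by (simp add: br_eq_sum[OF fin])
  finally show ?thesis .
qed

lemma br_add_right:
  assumes "u \<in> SV" "v \<in> SV" "v' \<in> SV"
  shows "br eps u (v + v') = br eps u v + br eps u v'"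
proof -
  let ?T = "supp v \<union> supp v'"
  have fin: "finite (supp u)" "finite ?T"
    using assms by (auto simp: finite_supp)
  have "br eps u (v + v') = (\<Sum>i\<in>supp u. \<Sum>j\<in>?T. smult (u i * (v + v') j) (bb eps i j))"
    using supp_add by (intro br_eq_sum[OF fin]) auto
  also have "\<dots> = (\<Sum>i\<in>supp u. \<Sum>j\<in>?T. smult (u i * v j) (bb eps i j))
      + (\<Sum>i\<in>supp u. \<Sum>j\<in>?T. smult (u i * v' j) (bb eps i j))"
    by (simp add: sum.distrib[symmetric] smult_add_left[symmetric] plus_fun_apply algebra_simps)
  also have "\<dots> = br eps u v + br eps u v'"
    by (simp add: br_eq_sum[OF fin])
  finally show ?thesis .
qed

lemma br_smult_left:
  assumes "u \<in> SV" "v \<in> SV"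
  shows "br eps (smult c u) v = smult c (br eps u v)"
proof -
  have fin: "finite (supp u)" "finite (supp v)"
    using assms by (auto simp: finite_supp)
  have "br eps (smult c u) v = (\<Sum>i\<in>supp u. \<Sum>j\<in>supp v. smult (c * u i * v j) (bb eps i j))"
    using br_eq_sum[OF fin, of "smult c u" v] supp_smult[of c u]
    by (simp add: smult_apply mult.assoc)
  then show ?thesis
    by (simp add: br_def smult_sum mult.assoc)
qed

lemma br_smult_right:
  assumes "u \<in> SV" "v \<in> SV"
  shows "br eps u (smult c v) = smult c (br eps u v)"
proof -
  have fin: "finite (supp u)" "finite (supp v)"
    using assms by (auto simp: finite_supp)
  have "br eps u (smult c v) = (\<Sum>i\<in>supp u. \<Sum>j\<in>supp v. smult (u i * (c * v j)) (bb eps i j))"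
    using br_eq_sum[OF fin, of u "smult c v"] supp_smult[of c v] by (simp add: smult_apply)
  then show ?thesis
    by (simp add: br_def smult_sum algebra_simps)
qed

lemmas br_linear = br_add_left br_add_right br_smult_left br_smult_right

lemma lin_map_br_right: "u \<in> SV \<Longrightarrow> lin_map (br eps u)"
  by (simp add: lin_map_def br_add_right br_smult_right)

lemma lin_map_br_left: "v \<in> SV \<Longrightarrow> lin_map (\<lambda>u. br eps u v)"
  by (simp add: lin_map_def br_add_left br_smult_left)

lemma bb_antisym: "bb eps j i = smult (-1) (bb eps i j)"
  by (cases i; cases j) (simp_all add: fun_eq_iff smult_apply zero_fun_apply add.commute)

lemma br_antisym: "br eps v u = smult (-1) (br eps u v)"
proof -
  have "br eps v u = (\<Sum>i\<in>supp u. \<Sum>j\<in>supp v. smult (v j * u i) (bb eps j i))"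
    unfolding br_def by (rule sum.swap)
  also have "\<dots> = (\<Sum>i\<in>supp u. \<Sum>j\<in>supp v. smult (-1) (smult (u i * v j) (bb eps i j)))"
    by (intro sum.cong refl, subst bb_antisym) (simp add: mult.commute)
  also have "\<dots> = smult (-1) (br eps u v)"
    by (simp only: br_def smult_sum)
  finally show ?thesis .
qed

fun bb_index :: "real \<Rightarrow> sv_idx \<Rightarrow> sv_idx \<Rightarrow> sv_idx" where
  "bb_index eps (L m) (L n) = L (m + n)"
| "bb_index eps (L m) (Y n) = Y (m + n)"
| "bb_index eps (L m) (M n) = M (m + n)"
| "bb_index eps (Y m) (L n) = Y (m + n)"
| "bb_index eps (M m) (L n) = M (m + n)"
| "bb_index eps (Y m) (Y n) = M (m + n + two_eps eps)"
| "bb_index eps (Y m) (M n) = L 0"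
| "bb_index eps (M m) (Y n) = L 0"
| "bb_index eps (M m) (M n) = L 0"

fun bb_coeff :: "real \<Rightarrow> sv_idx \<Rightarrow> sv_idx \<Rightarrow> complex" where
  "bb_coeff eps (L m) (L n) = of_int (m - n)"
| "bb_coeff eps (L m) (Y n) = of_int m / 2 - (of_int n + complex_of_real eps)"
| "bb_coeff eps (L m) (M n) = - of_int n"
| "bb_coeff eps (Y m) (L n) = - (of_int n / 2 - (of_int m + complex_of_real eps))"
| "bb_coeff eps (M m) (L n) = of_int m"
| "bb_coeff eps (Y m) (Y n) = of_int (m - n)"
| "bb_coeff eps (Y m) (M n) = 0"
| "bb_coeff eps (M m) (Y n) = 0"
| "bb_coeff eps (M m) (M n) = 0"

lemma bb_eq_smult_bvec: "bb eps i j = smult (bb_coeff eps i j) (bvec (bb_index eps i j))"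
  by (cases i; cases j) (simp_all add: const_zero_eq)

lemma jacobi_bb:
  assumes half_int: "complex_of_real eps = of_int (two_eps eps) / 2"
  shows "smult (bb_coeff eps j k) (bb eps i (bb_index eps j k)) =
    smult (bb_coeff eps i j) (bb eps (bb_index eps i j) k)
    + smult (bb_coeff eps i k) (bb eps j (bb_index eps i k))"
  unfolding bb_eq_smult_bvec
  by (cases i; cases j; cases k) (auto simp: fun_eq_iff coord_simps half_int field_simps)

definition derivation :: "real \<Rightarrow> (sv_vec \<Rightarrow> sv_vec) \<Rightarrow> bool" where
  "derivation eps D \<longleftrightarrow> lin_map D \<and>
     (\<forall>u\<in>SV. \<forall>v\<in>SV. D (br eps u v) = br eps (D u) v + br eps u (D v))"

lemma derivation_lin_map: "derivation eps D \<Longrightarrow> lin_map D"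
  by (simp add: derivation_def)

lemma derivation_br:
  "derivation eps D \<Longrightarrow> u \<in> SV \<Longrightarrow> v \<in> SV \<Longrightarrow> D (br eps u v) = br eps (D u) v + br eps u (D v)"
  by (simp add: derivation_def)

lemma derivation_bb:
  "derivation eps D \<Longrightarrow> D (bb eps i j) = br eps (D (bvec i)) (bvec j) + br eps (bvec i) (D (bvec j))"
  using derivation_br[of eps D "bvec i" "bvec j"] by simp

lemma derivation_if_bb:
  assumes lin: "lin_map D"
    and bb: "\<And>i j. D (bb eps i j) = br eps (D (bvec i)) (bvec j) + br eps (bvec i) (D (bvec j))"
  shows "derivation eps D"
  unfolding derivation_def
proof (intro conjI lin ballI)
  fix u v assume uv: "u \<in> SV" "v \<in> SV"
  have DS: "\<And>w. w \<in> SV \<Longrightarrow> D w \<in> SV"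
    using lin by (simp add: lin_map_SV)
  show "D (br eps u v) = br eps (D u) v + br eps u (D v)"
  proof (rule bilinear_eq_on_bvec[where B="\<lambda>u v. D (br eps u v)"])
    fix v :: sv_vec assume "v \<in> SV"
    then show "lin_map (\<lambda>u. D (br eps u v))" "lin_map (\<lambda>u. br eps (D u) v + br eps u (D v))"
      using lin DS by (simp_all add: lin_map_def br_add_left br_smult_left smult_add_right algebra_simps)
  next
    fix u :: sv_vec assume "u \<in> SV"
    then show "lin_map (\<lambda>v. D (br eps u v))" "lin_map (\<lambda>v. br eps (D u) v + br eps u (D v))"
      using lin DS by (simp_all add: lin_map_def br_add_right br_smult_right smult_add_right algebra_simps)
  qed (use uv bb in auto)
qed

lemma derivation_plus: "derivation eps D \<Longrightarrow> derivation eps D' \<Longrightarrow> derivation eps (\<lambda>u. D u + D' u)"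
  unfolding derivation_def by (simp add: lin_map_plus lin_map_SV br_add_left br_add_right algebra_simps)

lemma derivation_scale: "derivation eps D \<Longrightarrow> derivation eps (\<lambda>u. smult c (D u))"
  unfolding derivation_def by (simp add: lin_map_scale lin_map_SV br_smult_left br_smult_right smult_add_right)

lemma derivation_cong: "derivation eps D \<Longrightarrow> (\<And>u. u \<in> SV \<Longrightarrow> D u = D' u) \<Longrightarrow> derivation eps D'"
  unfolding derivation_def lin_map_def by simp

lemma derivation_minus:
  assumes "derivation eps D" "derivation eps D'"
  shows "derivation eps (\<lambda>u. D u - D' u)"
  by (rule derivation_cong[OF derivation_plus[OF assms(1) derivation_scale[OF assms(2), of "-1"]]])
    (simp add: fun_eq_iff coord_simps)

lemma derivation_sum:
  "finite S \<Longrightarrow> (\<And>i. i \<in> S \<Longrightarrow> derivation eps (D i)) \<Longrightarrow> derivation eps (\<lambda>u. \<Sum>i\<in>S. D i u)"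
proof (induction S rule: finite_induct)
  case empty
  show ?case by (simp add: derivation_def lin_map_def)
next
  case (insert x F)
  then show ?case by (simp add: derivation_plus)
qed

lemma derivation_ad_bvec:
  assumes half_int: "complex_of_real eps = of_int (two_eps eps) / 2"
  shows "derivation eps (br eps (bvec i))"
proof (rule derivation_if_bb[OF lin_map_br_right[OF SV_bvec]])
  fix j k
  show "br eps (bvec i) (bb eps j k) = br eps (br eps (bvec i) (bvec j)) (bvec k) + br eps (bvec j) (br eps (bvec i) (bvec k))"
    using jacobi_bb[OF half_int, of j k i]
    by (simp add: bb_eq_smult_bvec[of eps i j] bb_eq_smult_bvec[of eps i k] bb_eq_smult_bvec[of eps j k]
        br_smult_left br_smult_right)
qed

lemma derivation_ad:
  assumes half_int: "complex_of_real eps = of_int (two_eps eps) / 2" and "a \<in> SV"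
  shows "derivation eps (br eps a)"
proof (rule derivation_cong)
  show "derivation eps (\<lambda>u. \<Sum>i\<in>supp a. smult (a i) (br eps (bvec i) u))"
    using assms by (intro derivation_sum derivation_scale derivation_ad_bvec) (auto simp: finite_supp)
  show "(\<Sum>i\<in>supp a. smult (a i) (br eps (bvec i) u)) = br eps a u" if "u \<in> SV" for u
    using lin_map_sum_bvec[OF lin_map_br_left[OF that, of eps] finite_supp[OF assms(2)], of a]
    by (simp only: SV_eq_sum_bvec[OF assms(2), symmetric])
qed

lemma derivation_lin_ext:
  assumes SV: "\<And>i. g i \<in> SV"
    and bb: "\<And>i j. smult (bb_coeff eps i j) (g (bb_index eps i j)) = br eps (g i) (bvec j) + br eps (bvec i) (g j)"
  shows "derivation eps (lin_ext g)"
proof (rule derivation_if_bb[OF lin_map_lin_ext[OF SV]])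
  fix i j
  show "lin_ext g (bb eps i j) = br eps (lin_ext g (bvec i)) (bvec j) + br eps (bvec i) (lin_ext g (bvec j))"
    using bb[of i j] by (simp add: bb_eq_smult_bvec[of eps i j] lin_map_smult[OF lin_map_lin_ext[OF SV]])
qed

lemma derivation_D1: "derivation eps D1"
  unfolding D1_def
proof (rule derivation_lin_ext)
  fix i j
  show "D1b i \<in> SV" by (cases i) (simp_all add: const_zero_eq)
  show "smult (bb_coeff eps i j) (D1b (bb_index eps i j)) = br eps (D1b i) (bvec j) + br eps (bvec i) (D1b j)"
    by (cases i; cases j) (auto simp: const_zero_eq br_smult_left br_smult_right fun_eq_iff coord_simps)
qed

lemma derivation_D2: "derivation eps D2"
  unfolding D2_def
proof (rule derivation_lin_ext)
  fix i j
  show "D2b i \<in> SV" by (cases i) (simp_all add: const_zero_eq)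
  show "smult (bb_coeff eps i j) (D2b (bb_index eps i j)) = br eps (D2b i) (bvec j) + br eps (bvec i) (D2b j)"
    by (cases i; cases j) (auto simp: const_zero_eq br_smult_left br_smult_right fun_eq_iff coord_simps algebra_simps)
qed

lemma derivation_D3: "derivation eps D3"
  unfolding D3_def
proof (rule derivation_lin_ext)
  fix i j
  show "D3b i \<in> SV" by (cases i) (simp_all add: const_zero_eq)
  show "smult (bb_coeff eps i j) (D3b (bb_index eps i j)) = br eps (D3b i) (bvec j) + br eps (bvec i) (D3b j)"
    by (cases i; cases j) (auto simp: const_zero_eq br_smult_left br_smult_right fun_eq_iff coord_simps algebra_simps)
qed

text \<open>Twice the degree, which is an integer also for \<open>Y\<close> when \<open>eps = 1/2\<close>.\<close>

fun deg2 :: "real \<Rightarrow> sv_idx \<Rightarrow> int" where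
  "deg2 eps (L m) = 2 * m"
| "deg2 eps (Y m) = 2 * m + two_eps eps"
| "deg2 eps (M m) = 2 * m"

lemma bb_deg2: "bb eps i j k \<noteq> 0 \<Longrightarrow> deg2 eps k = deg2 eps i + deg2 eps j"
  by (cases i; cases j) (auto simp: coord_simps split: if_splits)

lemma bb_L0_left:
  assumes half_int: "complex_of_real eps = of_int (two_eps eps) / 2"
  shows "bb eps (L 0) j = smult (- of_int (deg2 eps j) / 2) (bvec j)"
  by (cases j) (auto simp: half_int fun_eq_iff coord_simps field_simps)

lemma br_L0_left_apply:
  assumes half_int: "complex_of_real eps = of_int (two_eps eps) / 2" and "u \<in> SV"
  shows "br eps (bvec (L 0)) u k = - of_int (deg2 eps k) / 2 * u k"
proof -
  have "br eps (bvec (L 0)) u k = (\<Sum>j\<in>supp u. if j = k then - of_int (deg2 eps k) / 2 * u k else 0)"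
    by (auto simp: br_def sum_apply coord_simps bb_L0_left[OF half_int] intro!: sum.cong)
  also have "\<dots> = - of_int (deg2 eps k) / 2 * u k"
    using finite_supp[OF assms(2)] by (simp add: sum.delta supp_def)
  finally show ?thesis .
qed

lemma br_bvec_right_apply: "br eps u (bvec j) k = (\<Sum>i\<in>supp u. u i * bb eps i j k)"
  by (simp add: br_def sum_apply coord_simps)

text \<open>\<open>ad L\<^sub>0\<close> multiplies each basis vector by minus its degree \<open>deg2/2\<close>, so this inverts
  \<open>-ad L\<^sub>0\<close> away from degree zero. Subtracting \<open>ad (degree_inverse (D L\<^sub>0))\<close> from a
  derivation \<open>D\<close> leaves its degree-zero part.\<close>

definition degree_inverse :: "real \<Rightarrow> sv_vec \<Rightarrow> sv_vec" where
  "degree_inverse eps d = (\<lambda>k. if deg2 eps k = 0 then 0 else 2 * d k / of_int (deg2 eps k))"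

lemma supp_degree_inverse: "supp (degree_inverse eps d) \<subseteq> supp d"
  by (auto simp: supp_def degree_inverse_def)

lemma lin_map_degree_inverse: "lin_map (degree_inverse eps)"
  unfolding lin_map_def
proof (intro conjI ballI allI)
  show "degree_inverse eps u \<in> SV" if "u \<in> SV" for u
    using that finite_subset[OF supp_degree_inverse] by (simp add: SV_def)
qed (simp_all add: degree_inverse_def fun_eq_iff coord_simps add_divide_distrib)

definition degree_zero :: "real \<Rightarrow> (sv_vec \<Rightarrow> sv_vec) \<Rightarrow> bool" where
  "degree_zero eps h \<longleftrightarrow> (\<forall>j k. deg2 eps k \<noteq> deg2 eps j \<longrightarrow> h (bvec j) k = 0)"

definition deg0_part :: "real \<Rightarrow> (sv_vec \<Rightarrow> sv_vec) \<Rightarrow> sv_vec \<Rightarrow> sv_vec" where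
  "deg0_part eps D = (\<lambda>u. D u - br eps (degree_inverse eps (D (bvec (L 0)))) u)"

lemma br_derivation_L0_apply:
  assumes half_int: "complex_of_real eps = of_int (two_eps eps) / 2" and D: "derivation eps D"
  shows "br eps (D (bvec (L 0))) (bvec j) k = (of_int (deg2 eps k) - of_int (deg2 eps j)) / 2 * D (bvec j) k"
proof -
  have "smult (- of_int (deg2 eps j) / 2) (D (bvec j))
      = br eps (D (bvec (L 0))) (bvec j) + br eps (bvec (L 0)) (D (bvec j))"
    using derivation_bb[OF D, of "L 0" j]
    by (simp add: bb_L0_left[OF half_int] lin_map_smult[OF derivation_lin_map[OF D]])
  from fun_cong[OF this, of k] show ?thesis
    by (simp add: coord_simps br_L0_left_apply[OF half_int lin_map_SV[OF derivation_lin_map[OF D]]]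
        field_simps)
qed

lemma br_degree_inverse_bvec_apply:
  assumes "d \<in> SV"
  shows "br eps (degree_inverse eps d) (bvec j) k =
    (if deg2 eps k = deg2 eps j then 0
     else 2 / (of_int (deg2 eps k) - of_int (deg2 eps j)) * br eps d (bvec j) k)"
proof -
  have term_eq: "degree_inverse eps d i * bb eps i j k =
      (if deg2 eps k = deg2 eps j then 0
       else 2 / (of_int (deg2 eps k) - of_int (deg2 eps j)) * (d i * bb eps i j k))" for i
  proof (cases "bb eps i j k = 0")
    case False
    then have "deg2 eps k = deg2 eps i + deg2 eps j" by (rule bb_deg2)
    then show ?thesis by (auto simp: degree_inverse_def field_simps)
  qed simp
  have "br eps (degree_inverse eps d) (bvec j) k = (\<Sum>i\<in>supp d. degree_inverse eps d i * bb eps i j k)"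
    unfolding br_bvec_right_apply
    by (rule sum.mono_neutral_left)
      (use supp_degree_inverse finite_supp[OF assms] in \<open>auto simp: supp_def\<close>)
  then show ?thesis
    by (simp add: term_eq br_bvec_right_apply sum_distrib_left)
qed

lemma derivation_deg0_part:
  assumes half_int: "complex_of_real eps = of_int (two_eps eps) / 2" and D: "derivation eps D"
  shows "derivation eps (deg0_part eps D)"
  unfolding deg0_part_def
  using assms lin_map_SV[OF derivation_lin_map[OF D]] lin_map_SV[OF lin_map_degree_inverse]
  by (intro derivation_minus derivation_ad) auto

lemma degree_zero_deg0_part:
  assumes half_int: "complex_of_real eps = of_int (two_eps eps) / 2" and D: "derivation eps D"
  shows "degree_zero eps (deg0_part eps D)"
  unfolding degree_zero_def deg0_part_def
  using br_derivation_L0_apply[OF assms] lin_map_SV[OF derivation_lin_map[OF D]]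
  by (simp add: br_degree_inverse_bvec_apply field_simps)

lemma eps_cases:
  assumes "eps = 0 \<or> eps = 1/2"
  obtains "two_eps eps = 0" "complex_of_real eps = 0"
  | "two_eps eps = 1" "complex_of_real eps = 1/2"
proof (cases "eps = 0")
  case False
  with assms have half: "eps = 1/2" by simp
  show thesis by (rule that(2)) (simp_all add: two_eps_def half)
qed (use that(1) in \<open>simp add: two_eps_def\<close>)

lemma half_int_eps:
  "eps = 0 \<or> eps = 1/2 \<Longrightarrow> complex_of_real eps = of_int (two_eps eps) / 2"
  by (cases rule: eps_cases) auto

definition bracket_closed :: "real \<Rightarrow> (sv_idx \<Rightarrow> bool) \<Rightarrow> bool" where
  "bracket_closed eps P \<longleftrightarrow>
     (\<forall>i j c k. P i \<longrightarrow> P j \<longrightarrow> bb eps i j = smult c (bvec k) \<longrightarrow> c \<noteq> 0 \<longrightarrow> P k)"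

lemma bracket_closedD:
  "bracket_closed eps P \<Longrightarrow> P i \<Longrightarrow> P j \<Longrightarrow> bb eps i j = smult c (bvec k) \<Longrightarrow> c \<noteq> 0 \<Longrightarrow> P k"
  unfolding bracket_closed_def by blast

lemma bracket_closed_L:
  assumes P: "bracket_closed eps P"
    and gens: "P (L 1)" "P (L (-1))" "P (L 2)" "P (L (-2))"
  shows "P (L n)"
proof -
  have sum: "P (L (m + n))" if "P (L m)" "P (L n)" "m \<noteq> n" for m n
    by (rule bracket_closedD[OF P that(1,2), of "of_int (m - n)"]) (use that(3) in simp_all)
  have up: "P (L n)" if "n \<ge> 2" for n
    using that
  proof (induction n rule: int_ge_induct)
    case (step i)
    then show ?case using sum[OF step(2) gens(1)] by simp
  qed (use gens in simp)
  have down: "P (L n)" if "n \<le> -2" for n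
    using that
  proof (induction n rule: int_le_induct)
    case (step i)
    then show ?case using sum[OF step(2) gens(2)] by simp
  qed (use gens in simp)
  have "n \<ge> 2 \<or> n \<le> -2 \<or> n \<in> {-1, 0, 1}" by auto
  then show ?thesis
    using up down gens sum[OF gens(1,2)] by auto
qed

text \<open>\<open>Y\<^sub>n\<close> is a nonzero multiple of \<open>[L\<^sub>n, Y\<^sub>0]\<close> unless \<open>n = 2 eps\<close>, and
  \<open>M\<^sub>k\<close> one of \<open>[Y\<^sub>m, Y\<^sub>n]\<close> with \<open>m + n + 2 eps = k\<close>, \<open>m \<noteq> n\<close>.\<close>

lemma bracket_closed_all:
  assumes eps: "eps = 0 \<or> eps = 1/2" and P: "bracket_closed eps P"
    and gens: "P (L 1)" "P (L (-1))" "P (L 2)" "P (L (-2))" "P (Y 0)"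
  shows "P i"
proof -
  define te where "te = two_eps eps"
  have te01: "te = 0 \<or> te = 1" and half_int: "complex_of_real eps = of_int te / 2"
    using eps by (cases rule: eps_cases; simp add: te_def)+
  have L: "P (L n)" for n
    by (rule bracket_closed_L[OF P gens(1-4)])
  have LY: "P (Y (m + n))" if "P (Y n)" "m - 2 * n \<noteq> te" for m n
  proof (rule bracket_closedD[OF P L that(1), of m "of_int (m - 2 * n - te) / 2"])
    show "bb eps (L m) (Y n) = smult (of_int (m - 2 * n - te) / 2) (bvec (Y (m + n)))"
      by (simp add: half_int field_simps)
    have "(of_int (m - 2 * n - te) :: complex) \<noteq> 0"
      using that(2) by (simp only: of_int_eq_0_iff)
    then show "(of_int (m - 2 * n - te) / 2 :: complex) \<noteq> 0"
      by simp
  qed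
  have Y: "P (Y n)" for n
  proof (cases "n = te")
    case True
    have "P (Y (-1))" using LY[OF gens(5), of "-1"] te01 by auto
    then show ?thesis using LY[of "-1" "te + 1"] True te01 by auto
  qed (use LY[OF gens(5)] in simp)
  have M: "P (M k)" for k
  proof -
    have "P (M (m + n + te))" if "m \<noteq> n" for m n
      using bracket_closedD[OF P Y Y, of m n "of_int (m - n)"] that by (simp add: te_def)
    from this[of 1 "-1"] this[of "k - te" 0] show ?thesis
      by (cases "k = te") simp_all
  qed
  show ?thesis using L Y M by (cases i) auto
qed

fun level :: "sv_idx \<Rightarrow> int" where
  "level (L m) = m"
| "level (Y m) = m"
| "level (M m) = m"

lemma level_eq_if_deg2_eq:
  assumes "eps = 0 \<or> eps = 1/2" "deg2 eps k = deg2 eps j"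
  shows "level k = level j"
proof -
  have "two_eps eps = 0 \<or> two_eps eps = 1"
    by (cases rule: eps_cases[OF assms(1)]) simp_all
  with assms(2) show ?thesis
    by (cases k; cases j) auto
qed

lemma degree_zero_expand:
  assumes "eps = 0 \<or> eps = 1/2" "degree_zero eps h" "level j = n"
  shows "h (bvec j) = smult (h (bvec j) (L n)) (bvec (L n)) + smult (h (bvec j) (M n)) (bvec (M n))
    + smult (h (bvec j) (Y n)) (bvec (Y n))"
proof
  fix k
  have "h (bvec j) k = 0" if "level k \<noteq> n"
  proof -
    have "deg2 eps k \<noteq> deg2 eps j"
      using level_eq_if_deg2_eq[OF assms(1)] that assms(3) by blast
    then show ?thesis using assms(2) unfolding degree_zero_def by blast
  qed
  then show "h (bvec j) k = (smult (h (bvec j) (L n)) (bvec (L n)) + smult (h (bvec j) (M n)) (bvec (M n))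
    + smult (h (bvec j) (Y n)) (bvec (Y n))) k"
    by (cases k) (auto simp: coord_simps)
qed

lemma degree_zero_odd_even:
  assumes "two_eps eps = 1" "degree_zero eps h"
  shows "h (bvec (L m)) (Y n) = 0" "h (bvec (Y m)) (L n) = 0" "h (bvec (Y m)) (M n) = 0"
proof -
  have "deg2 eps (Y n) \<noteq> deg2 eps (L m)" "deg2 eps (L n) \<noteq> deg2 eps (Y m)" "deg2 eps (M n) \<noteq> deg2 eps (Y m)"
    using assms(1) by (simp_all, presburger+)
  then show "h (bvec (L m)) (Y n) = 0" "h (bvec (Y m)) (L n) = 0" "h (bvec (Y m)) (M n) = 0"
    using assms(2) unfolding degree_zero_def by blast+
qed

locale normalized_deg0_derivation =
  fixes eps :: real and H :: "sv_vec \<Rightarrow> sv_vec"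
  assumes eps: "eps = 0 \<or> eps = 1/2"
    and derivation: "derivation eps H"
    and degree_zero: "degree_zero eps H"
    and normalized: "H (bvec (L 1)) (L 1) = 0" "H (bvec (L 1)) (M 1) = 0" "H (bvec (L 1)) (Y 1) = 0"
      "H (bvec (L (-1))) (M (-1)) = 0" "H (bvec (Y 0)) (Y 0) = 0"
begin

lemma expand: "level j = n \<Longrightarrow> H (bvec j) = smult (H (bvec j) (L n)) (bvec (L n))
    + smult (H (bvec j) (M n)) (bvec (M n)) + smult (H (bvec j) (Y n)) (bvec (Y n))"
  by (rule degree_zero_expand[OF eps degree_zero])

lemma odd_even:
  "two_eps eps = 1 \<Longrightarrow> H (bvec (L m)) (Y n) = 0"
  "two_eps eps = 1 \<Longrightarrow> H (bvec (Y m)) (L n) = 0"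
  "two_eps eps = 1 \<Longrightarrow> H (bvec (Y m)) (M n) = 0"
  using degree_zero_odd_even[OF _ degree_zero] by blast+

lemma leibniz_bvec: "smult c (H (bvec k)) = br eps (H (bvec i)) (bvec j) + br eps (bvec i) (H (bvec j))"
  if "bb eps i j = smult c (bvec k)"
  using derivation_bb[OF derivation, of i j] that
  by (simp add: lin_map_smult[OF derivation_lin_map[OF derivation]])

lemma vanishes_L1: "H (bvec (L 1)) = 0"
  using expand[of "L 1" 1] by (simp add: normalized)

lemma vanishes_L0_Lm1: "H (bvec (L 0)) = 0" "H (bvec (L (-1))) = 0"
proof -
  define x where "x = H (bvec (L 0)) (L 0)"
  define y where "y = H (bvec (L 0)) (M 0)"
  define z where "z = H (bvec (L 0)) (Y 0)"
  define a where "a = H (bvec (L (-1))) (L (-1))"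
  define c where "c = H (bvec (L (-1))) (Y (-1))"
  have HL0: "H (bvec (L 0)) = smult x (bvec (L 0)) + smult y (bvec (M 0)) + smult z (bvec (Y 0))"
    using expand[of "L 0" 0] by (simp add: x_def y_def z_def)
  have HLm1: "H (bvec (L (-1))) = smult a (bvec (L (-1))) + smult c (bvec (Y (-1)))"
    using expand[of "L (-1)" "-1"] by (simp add: a_def c_def normalized)
  have rel1: "smult (-1) (H (bvec (L 1))) = br eps (H (bvec (L 0))) (bvec (L 1)) + br eps (bvec (L 0)) (H (bvec (L 1)))"
    by (rule leibniz_bvec) simp
  have rel2: "smult 2 (H (bvec (L 0))) = br eps (H (bvec (L 1))) (bvec (L (-1))) + br eps (bvec (L 1)) (H (bvec (L (-1))))"
    by (rule leibniz_bvec) simp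
  note rel1 = rel1[unfolded vanishes_L1 HL0, simplified br_linear SV_add SV_smult SV_bvec, simplified]
  note rel2 = rel2[unfolded vanishes_L1 HL0 HLm1, simplified br_linear SV_add SV_smult SV_bvec, simplified]
  have "x = 0"
    using fun_cong[OF rel1, of "L 1"] by (simp add: coord_simps)
  moreover have z: "z = 0"
  proof (cases rule: eps_cases[OF eps])
    case 1
    then show ?thesis using fun_cong[OF rel1, of "Y 1"] by (simp add: coord_simps)
  qed (simp add: z_def odd_even)
  moreover have "y = 0"
    using fun_cong[OF rel2, of "M 0"] by (simp add: coord_simps)
  moreover have "a = x"
    using fun_cong[OF rel2, of "L 0"] by (simp add: coord_simps)
  moreover have "c = 0"
    using fun_cong[OF rel2, of "Y 0"] z by (cases rule: eps_cases[OF eps]) (simp_all add: coord_simps)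
  ultimately show "H (bvec (L 0)) = 0" "H (bvec (L (-1))) = 0"
    by (simp_all add: HL0 HLm1)
qed

lemma vanishes_L2: "H (bvec (L 2)) = 0"
proof -
  define p where "p = H (bvec (L 2)) (L 2)"
  define q where "q = H (bvec (L 2)) (M 2)"
  define r where "r = H (bvec (L 2)) (Y 2)"
  have HL2: "H (bvec (L 2)) = smult p (bvec (L 2)) + smult q (bvec (M 2)) + smult r (bvec (Y 2))"
    using expand[of "L 2" 2] by (simp add: p_def q_def r_def)
  have rel: "smult 3 (H (bvec (L 1))) = br eps (H (bvec (L 2))) (bvec (L (-1))) + br eps (bvec (L 2)) (H (bvec (L (-1))))"
    by (rule leibniz_bvec) simp
  note rel = rel[unfolded vanishes_L1 vanishes_L0_Lm1 HL2, simplified br_linear SV_add SV_smult SV_bvec, simplified]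
  have "p = 0" "q = 0"
    using fun_cong[OF rel, of "L 1"] fun_cong[OF rel, of "M 1"] by (simp_all add: coord_simps)
  moreover have "r = 0"
    using fun_cong[OF rel, of "Y 1"] by (cases rule: eps_cases[OF eps]) (simp_all add: coord_simps)
  ultimately show ?thesis
    by (simp add: HL2)
qed

lemma vanishes_Lm2: "H (bvec (L (-2))) = 0"
proof -
  define p where "p = H (bvec (L (-2))) (L (-2))"
  define q where "q = H (bvec (L (-2))) (M (-2))"
  define r where "r = H (bvec (L (-2))) (Y (-2))"
  have HLm2: "H (bvec (L (-2))) = smult p (bvec (L (-2))) + smult q (bvec (M (-2))) + smult r (bvec (Y (-2)))"
    using expand[of "L (-2)" "-2"] by (simp add: p_def q_def r_def)
  have rel: "smult (-3) (H (bvec (L (-1)))) = br eps (H (bvec (L (-2)))) (bvec (L 1)) + br eps (bvec (L (-2))) (H (bvec (L 1)))"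
    by (rule leibniz_bvec) simp
  note rel = rel[unfolded vanishes_L1 vanishes_L0_Lm1 HLm2, simplified br_linear SV_add SV_smult SV_bvec, simplified]
  have "p = 0" "q = 0"
    using fun_cong[OF rel, of "L (-1)"] fun_cong[OF rel, of "M (-1)"] by (simp_all add: coord_simps)
  moreover have "r = 0"
    using fun_cong[OF rel, of "Y (-1)"] by (cases rule: eps_cases[OF eps]) (simp_all add: coord_simps)
  ultimately show ?thesis
    by (simp add: HLm2)
qed

lemma vanishes_Y0: "H (bvec (Y 0)) = 0"
proof -
  define x where "x = H (bvec (Y 0)) (L 0)"
  define y where "y = H (bvec (Y 0)) (M 0)"
  define u where "u = H (bvec (Y 1)) (L 1)"
  define v where "v = H (bvec (Y 1)) (M 1)"
  define w where "w = H (bvec (Y 1)) (Y 1)"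
  have HY0: "H (bvec (Y 0)) = smult x (bvec (L 0)) + smult y (bvec (M 0))"
    using expand[of "Y 0" 0] by (simp add: x_def y_def normalized)
  have HY1: "H (bvec (Y 1)) = smult u (bvec (L 1)) + smult v (bvec (M 1)) + smult w (bvec (Y 1))"
    using expand[of "Y 1" 1] by (simp add: u_def v_def w_def)
  have rel1: "smult (1/2 - complex_of_real eps) (H (bvec (Y 1)))
      = br eps (H (bvec (L 1))) (bvec (Y 0)) + br eps (bvec (L 1)) (H (bvec (Y 0)))"
    by (rule leibniz_bvec) simp
  have rel2: "smult (- 3/2 - complex_of_real eps) (H (bvec (Y 0)))
      = br eps (H (bvec (L (-1)))) (bvec (Y 1)) + br eps (bvec (L (-1))) (H (bvec (Y 1)))"
    by (rule leibniz_bvec) (simp add: field_simps)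
  note rel1 = rel1[unfolded vanishes_L1 HY0 HY1, simplified br_linear SV_add SV_smult SV_bvec, simplified]
  note rel2 = rel2[unfolded vanishes_L0_Lm1 HY0 HY1, simplified br_linear SV_add SV_smult SV_bvec, simplified]
  have "x = 0 \<and> y = 0"
  proof (cases rule: eps_cases[OF eps])
    case 1
    then show ?thesis
      using fun_cong[OF rel1, of "L 1"] fun_cong[OF rel1, of "M 1"]
        fun_cong[OF rel2, of "L 0"] fun_cong[OF rel2, of "M 0"]
      by (simp add: coord_simps)
  qed (simp add: x_def y_def odd_even)
  then show ?thesis
    by (simp add: HY0)
qed

lemma vanishes: "u \<in> SV \<Longrightarrow> H u = 0"
proof -
  have closed: "bracket_closed eps (\<lambda>i. H (bvec i) = 0)"
    unfolding bracket_closed_def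
  proof (intro allI impI)
    fix i j c k
    assume "H (bvec i) = 0" "H (bvec j) = 0" "bb eps i j = smult c (bvec k)" "c \<noteq> 0"
    then show "H (bvec k) = 0"
      using leibniz_bvec[of i j c k] by (auto intro: smult_cancel[of c _ 0])
  qed
  have "H (bvec i) = 0" for i
    by (rule bracket_closed_all[OF eps closed])
      (simp_all add: vanishes_L1 vanishes_L0_Lm1 vanishes_L2 vanishes_Lm2 vanishes_Y0)
  then show "u \<in> SV \<Longrightarrow> H u = 0"
    using lin_map_eq_on_bvec[OF derivation_lin_map[OF derivation], of "\<lambda>_. 0"]
    by (simp add: lin_map_def)
qed

end

definition coef_D1 :: "(sv_vec \<Rightarrow> sv_vec) \<Rightarrow> complex" where
  "coef_D1 E = (E (bvec (L 1)) (M 1) + E (bvec (L (-1))) (M (-1))) / 2"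

definition coef_D2 :: "(sv_vec \<Rightarrow> sv_vec) \<Rightarrow> complex" where
  "coef_D2 E = (E (bvec (L 1)) (M 1) - E (bvec (L (-1))) (M (-1))) / 2"

definition coef_D3 :: "real \<Rightarrow> (sv_vec \<Rightarrow> sv_vec) \<Rightarrow> complex" where
  "coef_D3 eps E = E (bvec (Y 0)) (Y 0) - E (bvec (L 1)) (L 1) * complex_of_real eps"

definition inner_part :: "real \<Rightarrow> (sv_vec \<Rightarrow> sv_vec) \<Rightarrow> sv_vec" where
  "inner_part eps E = smult (- E (bvec (L 1)) (L 1)) (bvec (L 0))
     + smult (if two_eps eps = 0 then -2 * E (bvec (L 1)) (Y 1) else 0) (bvec (Y 0))"

text \<open>The coefficients are chosen so that \<open>normal_form eps E\<close> has the same coordinates as \<open>E\<close>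
  at \<open>(L\<^sub>1, L\<^sub>1)\<close>, \<open>(L\<^sub>1, M\<^sub>1)\<close>, \<open>(L\<^sub>1, Y\<^sub>1)\<close>, \<open>(L\<^sub>-\<^sub>1, M\<^sub>-\<^sub>1)\<close> and \<open>(Y\<^sub>0, Y\<^sub>0)\<close>.\<close>

definition normal_form :: "real \<Rightarrow> (sv_vec \<Rightarrow> sv_vec) \<Rightarrow> sv_vec \<Rightarrow> sv_vec" where
  "normal_form eps E = (\<lambda>u. smult (coef_D1 E) (D1 u) + smult (coef_D2 E) (D2 u)
     + smult (coef_D3 eps E) (D3 u) + br eps (inner_part eps E) u)"

lemma derivation_normal_form:
  assumes half_int: "complex_of_real eps = of_int (two_eps eps) / 2"
  shows "derivation eps (normal_form eps E)"
  unfolding normal_form_def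
  by (intro derivation_plus derivation_scale derivation_D1 derivation_D2 derivation_D3
      derivation_ad[OF half_int]) (simp add: inner_part_def)

lemma normal_form_bvec:
  "normal_form eps E (bvec j) = smult (coef_D1 E) (D1b j) + smult (coef_D2 E) (D2b j)
     + smult (coef_D3 eps E) (D3b j) + smult (- E (bvec (L 1)) (L 1)) (bb eps (L 0) j)
     + smult (if two_eps eps = 0 then -2 * E (bvec (L 1)) (Y 1) else 0) (bb eps (Y 0) j)"
  by (simp add: normal_form_def inner_part_def D1_def D2_def D3_def br_add_left br_smult_left add.assoc)

lemma degree_zero_normal_form: "degree_zero eps (normal_form eps E)"
  unfolding degree_zero_def
proof (intro allI impI)
  fix j k assume deg: "deg2 eps k \<noteq> deg2 eps j"
  have "D1b j k = 0" "D2b j k = 0" "D3b j k = 0"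
    using deg by (cases j; auto simp: coord_simps)+
  moreover have "bb eps (L 0) j k = 0"
    using bb_deg2[of eps "L 0" j k] deg by auto
  moreover have "bb eps (Y 0) j k = 0" if "two_eps eps = 0"
    using bb_deg2[of eps "Y 0" j k] deg that by auto
  ultimately show "normal_form eps E (bvec j) k = 0"
    by (simp add: normal_form_bvec coord_simps)
qed

lemma normal_form_coordinates:
  assumes eps: "eps = 0 \<or> eps = 1/2" and E: "degree_zero eps E"
  shows "normal_form eps E (bvec (L 1)) (L 1) = E (bvec (L 1)) (L 1)"
    "normal_form eps E (bvec (L 1)) (M 1) = E (bvec (L 1)) (M 1)"
    "normal_form eps E (bvec (L 1)) (Y 1) = E (bvec (L 1)) (Y 1)"
    "normal_form eps E (bvec (L (-1))) (M (-1)) = E (bvec (L (-1))) (M (-1))"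
    "normal_form eps E (bvec (Y 0)) (Y 0) = E (bvec (Y 0)) (Y 0)"
  using degree_zero_odd_even(1)[OF _ E, of 1 1]
  by (cases rule: eps_cases[OF eps];
      simp add: normal_form_bvec coord_simps coef_D1_def coef_D2_def coef_D3_def field_simps)+

lemma degree_zero_minus:
  "degree_zero eps h \<Longrightarrow> degree_zero eps g \<Longrightarrow> degree_zero eps (\<lambda>u. h u - g u)"
  by (simp add: degree_zero_def)

lemma degree_zero_derivation_eq_normal_form:
  assumes eps: "eps = 0 \<or> eps = 1/2" and E: "derivation eps E" "degree_zero eps E" and "u \<in> SV"
  shows "E u = normal_form eps E u"
proof -
  have half_int: "complex_of_real eps = of_int (two_eps eps) / 2"
    by (rule half_int_eps[OF eps])
  interpret normalized_deg0_derivation eps "\<lambda>u. E u - normal_form eps E u"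
    using eps E derivation_minus[OF E(1) derivation_normal_form[OF half_int]]
      degree_zero_minus[OF E(2) degree_zero_normal_form] normal_form_coordinates[OF eps E(2)]
    by unfold_locales simp_all
  show ?thesis
    using vanishes[OF \<open>u \<in> SV\<close>] by simp
qed

definition ad_part :: "real \<Rightarrow> (sv_vec \<Rightarrow> sv_vec) \<Rightarrow> sv_vec" where
  "ad_part eps D = inner_part eps (deg0_part eps D) + degree_inverse eps (D (bvec (L 0)))"

lemma derivation_decomposition:
  assumes eps: "eps = 0 \<or> eps = 1/2" and D: "derivation eps D" and u: "u \<in> SV"
  shows "D u = smult (coef_D1 (deg0_part eps D)) (D1 u) + smult (coef_D2 (deg0_part eps D)) (D2 u)
    + smult (coef_D3 eps (deg0_part eps D)) (D3 u) + br eps (ad_part eps D) u"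
proof -
  have half_int: "complex_of_real eps = of_int (two_eps eps) / 2"
    by (rule half_int_eps[OF eps])
  define A where "A = degree_inverse eps (D (bvec (L 0)))"
  have A: "A \<in> SV"
    unfolding A_def by (intro lin_map_SV[OF lin_map_degree_inverse] lin_map_SV[OF derivation_lin_map[OF D]]) simp
  have "D u = deg0_part eps D u + br eps A u"
    by (simp add: deg0_part_def A_def)
  also have "deg0_part eps D u = normal_form eps (deg0_part eps D) u"
    using degree_zero_derivation_eq_normal_form[OF eps derivation_deg0_part[OF half_int D]
        degree_zero_deg0_part[OF half_int D] u] .
  finally show ?thesis
    using A u by (simp add: normal_form_def ad_part_def A_def[symmetric] br_add_left inner_part_def add.assoc)
qed

lemma derivation_decomposition_right:
  assumes eps: "eps = 0 \<or> eps = 1/2" and D: "derivation eps D" and u: "u \<in> SV"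
  shows "D u = smult (coef_D1 (deg0_part eps D)) (D1 u) + smult (coef_D2 (deg0_part eps D)) (D2 u)
    + smult (coef_D3 eps (deg0_part eps D)) (D3 u) + br eps u (smult (-1) (ad_part eps D))"
proof -
  have "ad_part eps D \<in> SV"
    unfolding ad_part_def inner_part_def
    by (simp add: lin_map_SV[OF lin_map_degree_inverse] lin_map_SV[OF derivation_lin_map[OF D]])
  then show ?thesis
    using derivation_decomposition[OF assms] u
    by (simp add: br_smult_right br_antisym[of eps u "ad_part eps D"])
qed

lemma lin_fun_coordinate: "lin_map G \<Longrightarrow> lin_fun (\<lambda>x. G x k)"
  by (simp add: lin_map_def lin_fun_def coord_simps)

lemma lin_map_deg0_part_param:
  assumes F: "\<And>v. v \<in> SV \<Longrightarrow> lin_map (\<lambda>x. F x v)" and v: "v \<in> SV"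
  shows "lin_map (\<lambda>x. deg0_part eps (F x) v)"
  unfolding deg0_part_def
  by (intro lin_map_minus F v lin_map_comp[OF lin_map_comp[OF F lin_map_degree_inverse] lin_map_br_left]) simp

lemma decomposition_linear_in_param:
  assumes F: "\<And>v. v \<in> SV \<Longrightarrow> lin_map (\<lambda>x. F x v)"
  shows "lin_fun (\<lambda>x. coef_D1 (deg0_part eps (F x)))" "lin_fun (\<lambda>x. coef_D2 (deg0_part eps (F x)))"
    "lin_fun (\<lambda>x. coef_D3 eps (deg0_part eps (F x)))" "lin_map (\<lambda>x. ad_part eps (F x))"
proof -
  have coord: "lin_fun (\<lambda>x. deg0_part eps (F x) (bvec i) k)" for i k
    by (rule lin_fun_coordinate[OF lin_map_deg0_part_param[OF F SV_bvec]])
  have L0: "lin_map (\<lambda>x. degree_inverse eps (F x (bvec (L 0))))"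
    by (rule lin_map_comp[OF F[OF SV_bvec] lin_map_degree_inverse])
  show "lin_fun (\<lambda>x. coef_D1 (deg0_part eps (F x)))" "lin_fun (\<lambda>x. coef_D2 (deg0_part eps (F x)))"
    "lin_fun (\<lambda>x. coef_D3 eps (deg0_part eps (F x)))"
    using coord unfolding lin_fun_def coef_D1_def coef_D2_def coef_D3_def by (simp_all add: field_simps)
  show "lin_map (\<lambda>x. ad_part eps (F x))"
    using coord L0 unfolding lin_map_def lin_fun_def ad_part_def inner_part_def
    by (simp add: fun_eq_iff coord_simps algebra_simps)
qed

lemma biderivation_derivation_right: "biderivation eps f \<Longrightarrow> x \<in> SV \<Longrightarrow> derivation eps (f x)"
  by (simp add: biderivation_def derivation_def)

lemma biderivation_derivation_left: "biderivation eps f \<Longrightarrow> y \<in> SV \<Longrightarrow> derivation eps (\<lambda>x. f x y)"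
  by (simp add: biderivation_def derivation_def add.commute)

theorem lemma3p1:
  fixes eps :: real and f :: "sv_vec \<Rightarrow> sv_vec \<Rightarrow> sv_vec"
  assumes "eps = 0 \<or> eps = 1/2"
    and "biderivation eps f"
  shows "\<exists>\<phi> \<psi> \<rho>1 \<rho>2 \<rho>3 \<theta>1 \<theta>2 \<theta>3.
           lin_map \<phi> \<and> lin_map \<psi> \<and>
           lin_fun \<rho>1 \<and> lin_fun \<rho>2 \<and> lin_fun \<rho>3 \<and>
           lin_fun \<theta>1 \<and> lin_fun \<theta>2 \<and> lin_fun \<theta>3 \<and>
           (\<forall>x\<in>SV. \<forall>y\<in>SV.
              f x y = smult (\<rho>1 x) (D1 y) + smult (\<rho>2 x) (D2 y) + smult (\<rho>3 x) (D3 y)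
                      + br eps (\<phi> x) y \<and>
              f x y = smult (\<theta>1 y) (D1 x) + smult (\<theta>2 y) (D2 x) + smult (\<theta>3 y) (D3 x)
                      + br eps x (\<psi> y))"
proof -
  let ?E = "\<lambda>x. deg0_part eps (f x)" and ?E' = "\<lambda>y. deg0_part eps (\<lambda>x. f x y)"
  have left: "\<And>v. v \<in> SV \<Longrightarrow> lin_map (\<lambda>x. f x v)" and right: "\<And>v. v \<in> SV \<Longrightarrow> lin_map (\<lambda>y. f v y)"
    using assms(2) by (simp_all add: biderivation_def)
  note lin_x = decomposition_linear_in_param[where F=f, OF left]
    and lin_y = decomposition_linear_in_param[where F="\<lambda>y x. f x y", OF right]
  note decomposition_x = derivation_decomposition[OF assms(1) biderivation_derivation_right[OF assms(2)]]
    and decomposition_y = derivation_decomposition_right[OF assms(1) biderivation_derivation_left[OF assms(2)]]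
  show ?thesis
    by (rule exI[of _ "\<lambda>x. ad_part eps (f x)"], rule exI[of _ "\<lambda>y. smult (-1) (ad_part eps (\<lambda>x. f x y))"],
        rule exI[of _ "\<lambda>x. coef_D1 (?E x)"], rule exI[of _ "\<lambda>x. coef_D2 (?E x)"],
        rule exI[of _ "\<lambda>x. coef_D3 eps (?E x)"], rule exI[of _ "\<lambda>y. coef_D1 (?E' y)"],
        rule exI[of _ "\<lambda>y. coef_D2 (?E' y)"], rule exI[of _ "\<lambda>y. coef_D3 eps (?E' y)"])
      (use decomposition_x decomposition_y lin_x lin_y lin_map_scale[OF lin_y(4)] in blast)
qed

end
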